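(* If $\mathbf{A}\in\mathbb{R}^{n_1\times r}$ and $\mathbf{B}\in\mathbb{R}^{n_2\times r}$, then $\mu(\mathbf{A}\odot\mathbf{B})\le\mu(\mathbf{A})\mu(\mathbf{B})r$.
   Context: For an $n\times r$ matrix $\mathbf{M}$, its coherence is $\mu(\mathbf{M})=\frac{n}{r}\max_{i\in[n]}\|\mathrm{proj}_{\mathrm{col}(\mathbf{M})}\mathbf{e}_i\|_2^2$, where $r$ is the number of columns, $\mathrm{col}(\mathbf{M})$ the column space and $\mathbf{e}_i$ the $i$-th standard basis vector. The Khatri–Rao product $\mathbf{A}\odot\mathbf{B}\in\mathbb{R}^{n_1n_2\times r}$ is the matrix whose $\ell$-th column is the Kronecker product $\mathbf{A}_{:,\ell}\otimes\mathbf{B}_{:,\ell}$. *)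

theory Defs
  imports "HOL-Analysis.Analysis"
begin

text \<open>Column space of an n x r matrix (type real^'r^'n: rows indexed by 'n, columns by 'r).\<close>
definition col_space :: "real^'r^'n \<Rightarrow> (real^'n) set" where
  "col_space M = span (columns M)"

definition proj_onto :: "(real^'n) set \<Rightarrow> real^'n \<Rightarrow> real^'n" where
  "proj_onto V x = closest_point V x"

definition coherence :: "real^'r^'n \<Rightarrow> real" where
  "coherence M = (real CARD('n) / real CARD('r)) *
     Max ((\<lambda>i. (norm (proj_onto (col_space M) (axis i 1)))\<^sup>2) ` UNIV)"

text \<open>Khatri-Rao product: column l is the Kronecker product of column l of A and of B;
  rows indexed by pairs (i,j), corresponding to row (i-1) n2 + j.\<close>
definition khatri_rao :: "real^'r^'n1 \<Rightarrow> real^'r^'n2 \<Rightarrow> real^'r^('n1 \<times> 'n2)" where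
  "khatri_rao A B = (\<chi> p l. (A $ fst p $ l) * (B $ snd p $ l))"

end

theory Submission
  imports Defs
begin

text \<open>Write \<open>P\<close>, \<open>P\<^sub>A\<close>, \<open>P\<^sub>B\<close> for the orthogonal projections onto the column spaces of
  \<open>A \<odot> B\<close>, \<open>A\<close>, \<open>B\<close>. Every column \<open>a\<^sub>l \<otimes> b\<^sub>l\<close> of \<open>A \<odot> B\<close>, and hence every \<open>s\<close> in its
  column space, satisfies \<open>s\<^sub>(\<^sub>i\<^sub>,\<^sub>j\<^sub>) = \<langle>s, P\<^sub>A e\<^sub>i \<otimes> P\<^sub>B e\<^sub>j\<rangle>\<close>, because
  \<open>\<langle>a\<^sub>l \<otimes> b\<^sub>l, u \<otimes> v\<rangle> = \<langle>a\<^sub>l, u\<rangle> \<langle>b\<^sub>l, v\<rangle>\<close> and \<open>\<langle>a\<^sub>l, P\<^sub>A e\<^sub>i\<rangle> = a\<^sub>i\<^sub>l\<close>. Taking \<open>s = P e\<^sub>(\<^sub>i\<^sub>,\<^sub>j\<^sub>)\<close>,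
  for which \<open>s\<^sub>(\<^sub>i\<^sub>,\<^sub>j\<^sub>) = \<parallel>s\<parallel>\<^sup>2\<close>, and applying Cauchy-Schwarz gives \<open>\<parallel>P e\<^sub>(\<^sub>i\<^sub>,\<^sub>j\<^sub>)\<parallel> \<le> \<parallel>P\<^sub>A e\<^sub>i\<parallel> \<parallel>P\<^sub>B e\<^sub>j\<parallel>\<close>. Squaring and maximising
  over \<open>(i, j)\<close> gives the claim, since \<open>n\<^sub>1 n\<^sub>2 / r = r (n\<^sub>1 / r) (n\<^sub>2 / r)\<close>.\<close>

lemma subspace_col_space: "subspace (col_space M)"
  unfolding col_space_def by (rule subspace_span)

lemma column_in_col_space: "column l M \<in> col_space M"
  unfolding col_space_def columns_def by (rule span_base) blast

lemma proj_onto_in_subspace: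
  fixes S :: "(real^'n) set"
  assumes "subspace S"
  shows "proj_onto S x \<in> S"
  unfolding proj_onto_def
  using closest_point_in_set closed_subspace assms subspace_0 by blast

lemma proj_onto_orthogonal:
  fixes S :: "(real^'n) set"
  assumes S: "subspace S" and y: "y \<in> S"
  shows "inner (x - proj_onto S x) y = 0"
proof -
  let ?p = "proj_onto S x"
  have p: "?p \<in> S" using proj_onto_in_subspace[OF S] .
  have closest: "inner (x - ?p) (z - ?p) \<le> 0" if "z \<in> S" for z
    using closest_point_dot[OF subspace_imp_convex[OF S] closed_subspace[OF S] that]
    unfolding proj_onto_def .
  have "inner (x - ?p) y \<le> 0"
    using closest[of "?p + y"] p y S subspace_add by fastforce
  moreover have "inner (x - ?p) y \<ge> 0"
    using closest[of "?p - y"] p y S subspace_diff by (fastforce simp: inner_diff_right)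
  ultimately show ?thesis by linarith
qed

lemma inner_proj_onto_axis:
  fixes S :: "(real^'n) set"
  assumes "subspace S" and "x \<in> S"
  shows "inner (proj_onto S (axis i 1)) x = x $ i"
  using proj_onto_orthogonal[OF assms, of "axis i 1"]
  by (simp add: inner_diff_left inner_axis')

lemma norm_proj_onto_axis_le:
  fixes S :: "(real^'n) set"
  assumes S: "subspace S" and representer: "\<And>x. x \<in> S \<Longrightarrow> x $ i = inner x w"
  shows "norm (proj_onto S (axis i 1)) \<le> norm w"
proof -
  let ?p = "proj_onto S (axis i 1)"
  have p: "?p \<in> S" using proj_onto_in_subspace[OF S] .
  have "(norm ?p)\<^sup>2 = ?p $ i"
    using inner_proj_onto_axis[OF S p] by (simp add: power2_norm_eq_inner)
  also have "\<dots> = inner ?p w" using representer[OF p] .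
  also have "\<dots> \<le> norm ?p * norm w" by (rule norm_cauchy_schwarz)
  finally have "norm ?p * norm ?p \<le> norm ?p * norm w" by (simp add: power2_eq_square)
  then show ?thesis
    by (cases "norm ?p = 0") simp_all
qed

definition kronecker :: "real^'a \<Rightarrow> real^'b \<Rightarrow> real^('a \<times> 'b)" where
  "kronecker u v = (\<chi> p. u $ fst p * v $ snd p)"

lemma inner_kronecker:
  fixes u x :: "real^'a" and v y :: "real^'b"
  shows "inner (kronecker u v) (kronecker x y) = inner u x * inner v y"
proof -
  have "inner (kronecker u v) (kronecker x y)
      = (\<Sum>(p, q) \<in> UNIV \<times> UNIV. (u $ p * x $ p) * (v $ q * y $ q))"
    by (simp add: inner_vec_def kronecker_def UNIV_Times_UNIV case_prod_beta mult_ac)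
  also have "\<dots> = (\<Sum>p\<in>UNIV. \<Sum>q\<in>UNIV. (u $ p * x $ p) * (v $ q * y $ q))"
    by (rule sum.cartesian_product[symmetric])
  also have "\<dots> = inner u x * inner v y"
    by (simp add: sum_product inner_vec_def)
  finally show ?thesis .
qed

lemma norm_kronecker: "norm (kronecker u v) = norm u * norm v"
  by (simp add: norm_eq_sqrt_inner inner_kronecker real_sqrt_mult)

lemma column_khatri_rao:
  "column l (khatri_rao A B) = kronecker (column l A) (column l B)"
  by (simp add: column_def khatri_rao_def kronecker_def)

lemma col_space_khatri_rao_entry:
  fixes A :: "real^'r^'n1" and B :: "real^'r^'n2"
  assumes "s \<in> col_space (khatri_rao A B)"
  shows "s $ (i, j) = inner s (kronecker (proj_onto (col_space A) (axis i 1))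
                                         (proj_onto (col_space B) (axis j 1)))"
  using assms[unfolded col_space_def]
proof (induction rule: span_induct)
  case base
  show ?case unfolding subspace_def by (simp add: inner_add_left)
next
  case (step x)
  then obtain l where x: "x = kronecker (column l A) (column l B)"
    by (auto simp: columns_def column_khatri_rao)
  have "inner (proj_onto (col_space A) (axis i 1)) (column l A) = column l A $ i"
    and "inner (proj_onto (col_space B) (axis j 1)) (column l B) = column l B $ j"
    by (rule inner_proj_onto_axis[OF subspace_col_space column_in_col_space])+
  then show ?case
    by (simp add: x inner_kronecker inner_commute) (simp add: kronecker_def column_def)
qed

lemma norm_proj_khatri_rao_axis_le:
  fixes A :: "real^'r^'n1" and B :: "real^'r^'n2"
  shows "norm (proj_onto (col_space (khatri_rao A B)) (axis (i, j) 1))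
     \<le> norm (proj_onto (col_space A) (axis i 1)) * norm (proj_onto (col_space B) (axis j 1))"
  using norm_proj_onto_axis_le[OF subspace_col_space col_space_khatri_rao_entry]
  by (simp add: norm_kronecker)

lemma Max_pairs_le_Max_mult_Max:
  fixes f :: "'a::finite \<times> 'b::finite \<Rightarrow> real"
  assumes "\<And>i j. f (i, j) \<le> g i * h j" and "\<And>i. 0 \<le> g i" and "\<And>j. 0 \<le> h j"
  shows "Max (range f) \<le> Max (range g) * Max (range h)"
proof (rule Max.boundedI)
  have g_le: "g i \<le> Max (range g)" and h_le: "h j \<le> Max (range h)" for i j
    by simp_all
  fix x assume "x \<in> range f"
  then obtain i j where "x = f (i, j)" by auto
  also have "\<dots> \<le> g i * h j" by (rule assms(1))
  also have "\<dots> \<le> Max (range g) * Max (range h)"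
    using order_trans[OF assms(2) g_le] by (intro mult_mono g_le h_le assms(3))
  finally show "x \<le> Max (range g) * Max (range h)" .
qed auto

theorem lemma2:
  fixes A :: "real^'r^'n1" and B :: "real^'r^'n2"
  shows "coherence (khatri_rao A B) \<le> coherence A * coherence B * real CARD('r)"
proof -
  let ?mu = "\<lambda>S i. (norm (proj_onto S (axis i 1)))\<^sup>2"
  have "Max (range (?mu (col_space (khatri_rao A B))))
      \<le> Max (range (?mu (col_space A))) * Max (range (?mu (col_space B)))"
    using norm_proj_khatri_rao_axis_le
    by (intro Max_pairs_le_Max_mult_Max) (auto simp: power_mult_distrib[symmetric] power_mono)
  then have "real CARD('n1) * real CARD('n2) / real CARD('r) * Max (range (?mu (col_space (khatri_rao A B))))
      \<le> real CARD('n1) * real CARD('n2) / real CARD('r)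
         * (Max (range (?mu (col_space A))) * Max (range (?mu (col_space B))))"
    by (rule mult_left_mono) simp
  then show ?thesis
    by (simp add: coherence_def card_prod field_simps)
qed

end
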